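(* Let $(B_n)_{n\ge1}$ be a family of width-$5$ branching programs, where $B_n$ is on variables $x_1,\dots,x_n$ and has size at most $2^{(\log n)^c}$ for a constant $c$. Then there exist a constant space Turing machine $M$ with advice, a constant $c'$, and advice strings $(a_n)$ with $|a_n|\le 2^{(\log n)^{c'}}$, such that for every $x\in\{0,1\}^*$, $M$ accepts $x$ with advice $a_{|x|}$ iff $B_{|x|}(x)=1$.
   Context: A branching program on variables $x_1,\dots,x_n$ is a directed acyclic graph with a designated start node; nodes of out-degree 2 (inner nodes) are labeled by a variable and have one outgoing edge labeled 0 and one labeled 1; nodes of out-degree 0 (sinks) are labeled 0 or 1. An assignment determines a path from the start node to a sink, whose label is the output. Its size is the number of nodes. A width-$5$ branching program is one whose nodes are arranged into levels with edges going only from one level to the next, each level containing at most $5$ nodes. A constant space Turing machine with advice is a deterministic Turing machine with a read-only two-way input tape holding $x$, a separate read-only two-way advice tape holding an advice string $a_{|x|}$ depending only on $|x|$, and a work tape of which only a constant number of cells (independent of the input and advice) is ever used. *)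

theory Defs
  imports Complex_Main
begin

text \<open>Nodes are numbered 0 ..< size. An inner node Inner i a b queries the variable
  x_(i+1) (list index i) and goes to node a on 0 and to node b on 1; a sink Sink b outputs b.\<close>

datatype bpnode = Inner nat nat nat | Sink bool

record bp =
  bp_nodes :: "bpnode list"
  bp_start :: nat

definition bp_size :: "bp \<Rightarrow> nat" where
  "bp_size B = length (bp_nodes B)"

definition bp_wf :: "nat \<Rightarrow> bp \<Rightarrow> bool" where
  "bp_wf n B \<longleftrightarrow> bp_start B < bp_size B \<and>
     (\<forall>v < bp_size B. \<forall>i a b. bp_nodes B ! v = Inner i a b \<longrightarrow>
        i < n \<and> a < bp_size B \<and> b < bp_size B)"

text \<open>Width-5 (layered) branching program: a level function such that every edge goes
  from a level to the next one and each level has at most 5 nodes (this also makes the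
  graph acyclic).\<close>
definition width5_bp :: "nat \<Rightarrow> bp \<Rightarrow> bool" where
  "width5_bp n B \<longleftrightarrow> bp_wf n B \<and>
     (\<exists>lev :: nat \<Rightarrow> nat.
        (\<forall>v < bp_size B. \<forall>i a b. bp_nodes B ! v = Inner i a b \<longrightarrow>
            lev a = Suc (lev v) \<and> lev b = Suc (lev v)) \<and>
        (\<forall>l. card {v. v < bp_size B \<and> lev v = l} \<le> 5))"

definition bp_step :: "bp \<Rightarrow> bool list \<Rightarrow> nat \<Rightarrow> nat" where
  "bp_step B x v = (case bp_nodes B ! v of
       Inner i a b \<Rightarrow> (if x ! i then b else a)
     | Sink _ \<Rightarrow> v)"

text \<open>Output: the label of the sink reached by following the computation path; in an
  acyclic program the path reaches a sink within size steps and then stays there.\<close>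
definition bp_eval :: "bp \<Rightarrow> bool list \<Rightarrow> bool" where
  "bp_eval B x = (case bp_nodes B ! ((bp_step B x ^^ bp_size B) (bp_start B)) of
       Sink b \<Rightarrow> b
     | Inner _ _ _ \<Rightarrow> False)"

text \<open>Read-only tapes hold a word w between endmarkers: cell 0 is the left endmarker,
  cells 1..|w| hold w, cell |w|+1 is the right endmarker.\<close>
datatype tsym = LEnd | Sym bool | REnd

definition tape_read :: "bool list \<Rightarrow> nat \<Rightarrow> tsym" where
  "tape_read w i = (if i = 0 then LEnd else if i \<le> length w then Sym (w ! (i - 1)) else REnd)"

datatype move = MoveL | MoveS | MoveR

fun mv :: "move \<Rightarrow> nat \<Rightarrow> nat" where
  "mv MoveL i = i - 1"
| "mv MoveS i = i"
| "mv MoveR i = Suc i"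

text \<open>States are 0 ..< tm_states, work-tape symbols 0 ..< tm_syms (0 is the blank).
  The transition function gets state, input symbol, advice symbol, work symbol and returns
  new state, written work symbol, and moves of input, advice and work heads
  (None = halt).\<close>
record tm =
  tm_states :: nat
  tm_syms :: nat
  tm_start :: nat
  tm_accept :: "nat set"
  tm_delta :: "nat \<Rightarrow> tsym \<Rightarrow> tsym \<Rightarrow> nat \<Rightarrow> (nat \<times> nat \<times> move \<times> move \<times> move) option"

definition wf_tm :: "tm \<Rightarrow> bool" where
  "wf_tm M \<longleftrightarrow> 0 < tm_syms M \<and> tm_start M < tm_states M \<and>
     (\<forall>q a b g q' g' d1 d2 d3. q < tm_states M \<longrightarrow> g < tm_syms M \<longrightarrow>
        tm_delta M q a b g = Some (q', g', d1, d2, d3) \<longrightarrow>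
        q' < tm_states M \<and> g' < tm_syms M)"

record cfg =
  c_state :: nat
  c_ihead :: nat
  c_ahead :: nat
  c_whead :: nat
  c_wtape :: "nat \<Rightarrow> nat"

definition init_cfg :: "tm \<Rightarrow> cfg" where
  "init_cfg M = \<lparr>c_state = tm_start M, c_ihead = 0, c_ahead = 0, c_whead = 0,
                 c_wtape = (\<lambda>_. 0)\<rparr>"

definition tm_step :: "tm \<Rightarrow> bool list \<Rightarrow> bool list \<Rightarrow> cfg \<Rightarrow> cfg option" where
  "tm_step M x y c =
     (case tm_delta M (c_state c) (tape_read x (c_ihead c)) (tape_read y (c_ahead c))
                      (c_wtape c (c_whead c)) of
        None \<Rightarrow> None
      | Some (q', g', d1, d2, d3) \<Rightarrow>
          Some \<lparr>c_state = q',
                c_ihead = min (Suc (length x)) (mv d1 (c_ihead c)),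
                c_ahead = min (Suc (length y)) (mv d2 (c_ahead c)),
                c_whead = mv d3 (c_whead c),
                c_wtape = (c_wtape c)(c_whead c := g')\<rparr>)"

fun tm_run :: "tm \<Rightarrow> bool list \<Rightarrow> bool list \<Rightarrow> nat \<Rightarrow> cfg" where
  "tm_run M x y 0 = init_cfg M"
| "tm_run M x y (Suc t) = (case tm_step M x y (tm_run M x y t) of
       None \<Rightarrow> tm_run M x y t
     | Some c \<Rightarrow> c)"

definition tm_accepts :: "tm \<Rightarrow> bool list \<Rightarrow> bool list \<Rightarrow> bool" where
  "tm_accepts M x y \<longleftrightarrow> (\<exists>t. tm_step M x y (tm_run M x y t) = None \<and>
                              c_state (tm_run M x y t) \<in> tm_accept M)"

definition tm_const_space :: "tm \<Rightarrow> nat \<Rightarrow> bool" where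
  "tm_const_space M k \<longleftrightarrow> (\<forall>x y t. c_whead (tm_run M x y t) < k)"

end

(* The advice for inputs of length n lists the layers of B_n one after another, each padded to
   five entries.  The node with index j in its layer is written in unary: an inner node querying
   x_(i+1) whose successors are the q-th and r-th node of the next layer as 1^(i+1) 0 1^q 0 1^r 0,
   a sink labelled b as 0 1^b 0 0.  A two-head finite automaton walks along this list keeping only
   the index j < 5: it finds x_(i+1) by rewinding the input head and moving it along with the 1s
   of the advice, keeps q or r according to the bit it reads, and then reaches the chosen entry of
   the next layer by counting 0s, every entry containing exactly three of them.  Such an automaton
   is a Turing machine that never uses its work tape.  The advice has 5 size(B_n) entries of length
   O(n), which stays quasipolynomial.  For n \<le> 2 the bound only allows size(B_n) \<le> 2, so B_n is
   constant and a single answer bit serves as advice. *)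

theory Submission
  imports Defs
begin

section \<open>Two-head automata as constant space Turing machines\<close>

lemma tm_run_halted:
  assumes "tm_step M x y (tm_run M x y t) = None"
  shows "tm_run M x y (t + k) = tm_run M x y t"
  using assms by (induction k) simp_all

lemma tm_accepts_iff_halted:
  assumes halt: "tm_step M x y (tm_run M x y t) = None"
  shows "tm_accepts M x y \<longleftrightarrow> c_state (tm_run M x y t) \<in> tm_accept M"
proof -
  have "tm_run M x y t' = tm_run M x y t" if "tm_step M x y (tm_run M x y t') = None" for t'
    using tm_run_halted[OF halt, of "t' - t"] tm_run_halted[OF that, of "t - t'"]
    by (cases "t \<le> t'") simp_all
  then show ?thesis
    using halt unfolding tm_accepts_def by metis
qed

definition index_of :: "'a list \<Rightarrow> 'a \<Rightarrow> nat" where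
  "index_of L a = inv_into {..<length L} ((!) L) a"

lemma index_of:
  assumes "a \<in> set L"
  shows "index_of L a < length L" and "L ! index_of L a = a"
proof -
  have a: "a \<in> (!) L ` {..<length L}"
    using assms by (auto simp: in_set_conv_nth)
  show "index_of L a < length L"
    using inv_into_into[OF a] unfolding index_of_def by simp
  show "L ! index_of L a = a"
    using f_inv_into_f[OF a] unfolding index_of_def .
qed

type_synonym 's automaton = "'s \<Rightarrow> tsym \<Rightarrow> tsym \<Rightarrow> ('s \<times> move \<times> move) option"

definition fa_next :: "'s automaton \<Rightarrow> bool list \<Rightarrow> bool list \<Rightarrow> 's \<times> nat \<times> nat \<Rightarrow> ('s \<times> nat \<times> nat) option" where
  "fa_next \<delta> x y c = (case c of (s, i, h) \<Rightarrow>
     map_option (\<lambda>(s', d1, d2). (s', min (Suc (length x)) (mv d1 i), min (Suc (length y)) (mv d2 h)))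
       (\<delta> s (tape_read x i) (tape_read y h)))"

abbreviation fa_moves :: "'s automaton \<Rightarrow> bool list \<Rightarrow> bool list \<Rightarrow> 's \<times> nat \<times> nat \<Rightarrow> 's \<times> nat \<times> nat \<Rightarrow> bool" where
  "fa_moves \<delta> x y \<equiv> (\<lambda>c c'. fa_next \<delta> x y c = Some c')\<^sup>*\<^sup>*"

definition fa_closed :: "'s list \<Rightarrow> 's automaton \<Rightarrow> bool" where
  "fa_closed L \<delta> \<longleftrightarrow> (\<forall>s \<in> set L. \<forall>a b s' d1 d2. \<delta> s a b = Some (s', d1, d2) \<longrightarrow> s' \<in> set L)"

definition fa_tm :: "'s list \<Rightarrow> 's \<Rightarrow> 's set \<Rightarrow> 's automaton \<Rightarrow> tm" where
  "fa_tm L s0 A \<delta> = \<lparr>tm_states = length L, tm_syms = 1, tm_start = index_of L s0,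
     tm_accept = {q. q < length L \<and> L ! q \<in> A},
     tm_delta = (\<lambda>q a b g. if q < length L
        then map_option (\<lambda>(s', d1, d2). (index_of L s', 0, d1, d2, MoveS)) (\<delta> (L ! q) a b)
        else None)\<rparr>"

definition fa_cfg :: "'s list \<Rightarrow> 's \<times> nat \<times> nat \<Rightarrow> cfg" where
  "fa_cfg L c = (case c of (s, i, h) \<Rightarrow>
     \<lparr>c_state = index_of L s, c_ihead = i, c_ahead = h, c_whead = 0, c_wtape = (\<lambda>_. 0)\<rparr>)"

lemma wf_fa_tm:
  assumes "fa_closed L \<delta>" and "s0 \<in> set L"
  shows "wf_tm (fa_tm L s0 A \<delta>)"
  using assms unfolding wf_tm_def fa_tm_def fa_closed_def
  by (auto intro!: index_of(1)) (meson nth_mem)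

lemma fa_tm_const_space: "tm_const_space (fa_tm L s0 A \<delta>) 1"
proof -
  have "c_whead (tm_run (fa_tm L s0 A \<delta>) x y t) = 0" for x y t
    by (induction t) (auto simp: init_cfg_def tm_step_def fa_tm_def split: option.splits)
  then show ?thesis
    unfolding tm_const_space_def by simp
qed

lemma tm_step_fa_cfg:
  assumes "s \<in> set L"
  shows "tm_step (fa_tm L s0 A \<delta>) x y (fa_cfg L (s, i, h)) = map_option (fa_cfg L) (fa_next \<delta> x y (s, i, h))"
  using assms by (auto simp: tm_step_def fa_tm_def fa_cfg_def fa_next_def index_of fun_upd_def
    split: option.splits)

lemma fa_moves_closed:
  assumes "fa_moves \<delta> x y c c'" and "fa_closed L \<delta>" and "fst c \<in> set L"
  shows "fst c' \<in> set L"
  using assms by induction (fastforce simp: fa_next_def fa_closed_def split: prod.splits)+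

lemma tm_run_fa_moves:
  assumes "fa_moves \<delta> x y (s0, 0, 0) c" and "fa_closed L \<delta>" and "s0 \<in> set L"
  shows "\<exists>t. tm_run (fa_tm L s0 A \<delta>) x y t = fa_cfg L c"
  using assms(1)
proof induction
  case base
  have "tm_run (fa_tm L s0 A \<delta>) x y 0 = fa_cfg L (s0, 0, 0)"
    by (simp add: init_cfg_def fa_tm_def fa_cfg_def)
  then show ?case ..
next
  case (step c c')
  then obtain t where t: "tm_run (fa_tm L s0 A \<delta>) x y t = fa_cfg L c" by blast
  obtain s i h where c: "c = (s, i, h)" by (cases c)
  have "s \<in> set L"
    using fa_moves_closed[OF step.hyps(1) assms(2)] assms(3) c by simp
  then have "tm_run (fa_tm L s0 A \<delta>) x y (Suc t) = fa_cfg L c'"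
    using t c step.hyps(2) tm_step_fa_cfg by fastforce
  then show ?case ..
qed

lemma fa_moves_step:
  assumes "\<delta> s (tape_read x i) (tape_read y h) = Some (s', dx, dy)"
    and "mv dx i = i'" and "i' \<le> Suc (length x)" and "mv dy h = h'" and "h' \<le> Suc (length y)"
  shows "fa_moves \<delta> x y (s, i, h) (s', i', h')"
  using assms by (intro r_into_rtranclp) (auto simp: fa_next_def)

theorem tm_accepts_fa_tm:
  assumes "fa_closed L \<delta>" and "s0 \<in> set L"
    and "fa_moves \<delta> x y (s0, 0, 0) (s, i, h)" and "fa_next \<delta> x y (s, i, h) = None"
  shows "tm_accepts (fa_tm L s0 A \<delta>) x y \<longleftrightarrow> s \<in> A"
proof -
  obtain t where t: "tm_run (fa_tm L s0 A \<delta>) x y t = fa_cfg L (s, i, h)"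
    using tm_run_fa_moves[OF assms(3,1,2)] by blast
  have s: "s \<in> set L"
    using fa_moves_closed[OF assms(3,1)] assms(2) by simp
  have "tm_step (fa_tm L s0 A \<delta>) x y (tm_run (fa_tm L s0 A \<delta>) x y t) = None"
    using t tm_step_fa_cfg[OF s] assms(4) by simp
  from tm_accepts_iff_halted[OF this] show ?thesis
    using t s by (simp add: fa_cfg_def fa_tm_def index_of)
qed

section \<open>An automaton evaluating layered branching programs\<close>

(* Entry j: at the first symbol of the j-th entry of the current layer.
   Target j z p t: z is the queried bit, p selects the field being read (q if \<not> p, r if p),
   and t counts the field that z selects.
   Skip m t: passes m further 0s, then starts on entry t; after entry j it is entered with
   m = 3 (4 - j) + 3 t, which covers the rest of the layer and t entries of the next one.
   Probe and Peek treat an advice string of length 1 as the answer bit. *)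
datatype state = Start | Probe | Peek | Entry nat | Rewind nat | Locate nat
  | Target nat bool bool nat | Skip nat nat | Label | Accept | Reject

fun bp_delta :: "state automaton" where
  "bp_delta Start a b = Some (Probe, MoveS, MoveR)"
| "bp_delta Probe a b = Some (Peek, MoveS, MoveR)"
| "bp_delta Peek a b = Some (if b = REnd then Label else Entry 0, MoveS, MoveL)"
| "bp_delta (Entry j) a b = (case b of
      Sym True \<Rightarrow> Some (Rewind j, MoveS, MoveS)
    | Sym False \<Rightarrow> Some (Label, MoveS, MoveR)
    | _ \<Rightarrow> Some (Reject, MoveS, MoveS))"
| "bp_delta (Rewind j) a b =
    (if a = LEnd then Some (Locate j, MoveS, MoveS) else Some (Rewind j, MoveL, MoveS))"
| "bp_delta (Locate j) a b =
    (if b = Sym True then Some (Locate j, MoveR, MoveR)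
     else Some (Target j (a = Sym True) False 0, MoveS, MoveR))"
| "bp_delta (Target j z p t) a b =
    (if b = Sym True then
       (if z \<noteq> p then Some (Target j z p t, MoveS, MoveR)
        else if t < 4 then Some (Target j z p (Suc t), MoveS, MoveR)
        else Some (Reject, MoveS, MoveS))
     else if p then Some (Skip (3 * (4 - j) + 3 * t) t, MoveS, MoveR)
     else Some (Target j z True t, MoveS, MoveR))"
| "bp_delta (Skip m t) a b =
    (if m = 0 then Some (Entry t, MoveS, MoveS)
     else case b of
       Sym z \<Rightarrow> Some (Skip (if z then m else m - 1) t, MoveS, MoveR)
     | _ \<Rightarrow> Some (Reject, MoveS, MoveS))"
| "bp_delta Label a b = Some (if b = Sym True then Accept else Reject, MoveS, MoveS)"
| "bp_delta Accept a b = None"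
| "bp_delta Reject a b = None"

definition bp_states :: "state list" where
  "bp_states = [Start, Probe, Peek, Label, Accept, Reject] @
     map Entry [0..<5] @ map Rewind [0..<5] @ map Locate [0..<5] @
     [Target j z p t. j \<leftarrow> [0..<5], z \<leftarrow> [False, True], p \<leftarrow> [False, True], t \<leftarrow> [0..<5]] @
     [Skip m t. m \<leftarrow> [0..<25], t \<leftarrow> [0..<5]]"

fun bounded_state :: "state \<Rightarrow> bool" where
  "bounded_state (Entry j) \<longleftrightarrow> j < 5"
| "bounded_state (Rewind j) \<longleftrightarrow> j < 5"
| "bounded_state (Locate j) \<longleftrightarrow> j < 5"
| "bounded_state (Target j z p t) \<longleftrightarrow> j < 5 \<and> t < 5"
| "bounded_state (Skip m t) \<longleftrightarrow> m < 25 \<and> t < 5"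
| "bounded_state _ \<longleftrightarrow> True"

lemma set_bp_states: "set bp_states = {s. bounded_state s}"
proof -
  have "s \<in> set bp_states \<longleftrightarrow> bounded_state s" for s
    by (cases s) (auto simp: bp_states_def image_iff)
  then show ?thesis by blast
qed

lemma bp_delta_bounded:
  "bounded_state s \<Longrightarrow> bp_delta s a b = Some (s', d1, d2) \<Longrightarrow> bounded_state s'"
  by (cases s) (auto split: if_splits tsym.splits bool.splits)

lemma bp_states_closed: "fa_closed bp_states bp_delta"
  unfolding fa_closed_def set_bp_states using bp_delta_bounded by blast

definition bp_machine :: tm where
  "bp_machine = fa_tm bp_states Start {Accept} bp_delta"

abbreviation bp_moves :: "bool list \<Rightarrow> bool list \<Rightarrow> state \<times> nat \<times> nat \<Rightarrow> state \<times> nat \<times> nat \<Rightarrow> bool" where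
  "bp_moves \<equiv> fa_moves bp_delta"

lemma tape_read_append: "tape_read (pre @ b # post) (Suc (length pre)) = Sym b"
  by (simp add: tape_read_def nth_append)

lemma skip_moves:
  assumes "y = pre @ u @ post" and "u = [] \<or> last u = False" and "count_list u False \<le> m"
    and "i \<le> Suc (length x)"
  shows "bp_moves x y (Skip m t, i, Suc (length pre))
                      (Skip (m - count_list u False) t, i, Suc (length pre + length u))"
  using assms
proof (induction u arbitrary: pre m)
  case Nil
  then show ?case by simp
next
  case (Cons b u)
  have "m \<noteq> 0"
  proof (cases b)
    case True
    then have "u \<noteq> [] \<and> last u = False"
      using Cons.prems(2) by (auto split: if_splits)
    then have "False \<in> set u"
      using last_in_set by fastforce
    then show ?thesis
      using Cons.prems(3) True count_list_0_iff[of u False] by auto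
  qed (use Cons.prems(3) in simp)
  define m' where "m' = (if b then m else m - 1)"
  have "bp_moves x y (Skip m t, i, Suc (length pre)) (Skip m' t, i, Suc (length (pre @ [b])))"
    by (rule fa_moves_step[where dx = MoveS and dy = MoveR])
       (use \<open>m \<noteq> 0\<close> Cons.prems(1,4) in \<open>simp_all add: tape_read_append m'_def\<close>)
  also have "bp_moves x y (Skip m' t, i, Suc (length (pre @ [b])))
      (Skip (m' - count_list u False) t, i, Suc (length (pre @ [b]) + length u))"
    by (rule Cons.IH) (use Cons.prems in \<open>auto simp: m'_def split: if_splits\<close>)
  also have "m' - count_list u False = m - count_list (b # u) False"
    using \<open>m \<noteq> 0\<close> by (simp add: m'_def)
  finally show ?case
    by simp
qed

lemma rewind_moves:
  assumes "i \<le> Suc (length x)" and "h \<le> Suc (length y)"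
  shows "bp_moves x y (Rewind j, i, h) (Locate j, 0, h)"
  using assms(1)
proof (induction i)
  case 0
  show ?case
    by (rule fa_moves_step[where dx = MoveS and dy = MoveS])
       (use assms(2) in \<open>simp_all add: tape_read_def\<close>)
next
  case (Suc i)
  have "bp_moves x y (Rewind j, Suc i, h) (Rewind j, i, h)"
    by (rule fa_moves_step[where dx = MoveL and dy = MoveS])
       (use Suc.prems assms(2) in \<open>simp_all add: tape_read_def\<close>)
  also have "bp_moves x y (Rewind j, i, h) (Locate j, 0, h)"
    using Suc by simp
  finally show ?case .
qed

lemma locate_moves:
  assumes "y = pre @ replicate k True @ post" and "i + k \<le> Suc (length x)"
  shows "bp_moves x y (Locate j, i, Suc (length pre)) (Locate j, i + k, Suc (length pre + k))"
  using assms
proof (induction k arbitrary: i pre)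
  case 0
  then show ?case by simp
next
  case (Suc k)
  have "bp_moves x y (Locate j, i, Suc (length pre)) (Locate j, Suc i, Suc (length (pre @ [True])))"
    by (rule fa_moves_step[where dx = MoveR and dy = MoveR])
       (use Suc.prems in \<open>simp_all add: tape_read_append\<close>)
  also have "bp_moves x y (Locate j, Suc i, Suc (length (pre @ [True])))
      (Locate j, Suc i + k, Suc (length (pre @ [True]) + k))"
    by (rule Suc.IH) (use Suc.prems in simp_all)
  finally show ?case
    by simp
qed

lemma target_moves:
  assumes "y = pre @ replicate k True @ post" and "z = p \<longrightarrow> t + k < 5" and "i \<le> Suc (length x)"
  shows "bp_moves x y (Target j z p t, i, Suc (length pre))
           (Target j z p (if z = p then t + k else t), i, Suc (length pre + k))"
  using assms
proof (induction k arbitrary: t pre)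
  case 0
  then show ?case by simp
next
  case (Suc k)
  define t' where "t' = (if z = p then Suc t else t)"
  have "bp_moves x y (Target j z p t, i, Suc (length pre)) (Target j z p t', i, Suc (length (pre @ [True])))"
    by (rule fa_moves_step[where dx = MoveS and dy = MoveR])
       (use Suc.prems in \<open>auto simp: tape_read_append t'_def\<close>)
  also have "bp_moves x y (Target j z p t', i, Suc (length (pre @ [True])))
      (Target j z p (if z = p then t' + k else t'), i, Suc (length (pre @ [True]) + k))"
    by (rule Suc.IH) (use Suc.prems in \<open>auto simp: t'_def\<close>)
  finally show ?case
    unfolding t'_def by (cases "z = p") simp_all
qed

definition entry :: "nat \<Rightarrow> nat \<Rightarrow> nat \<Rightarrow> bool list" where
  "entry p q r = replicate p True @ False # replicate q True @ False # replicate r True @ [False]"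

lemma entry_reads_variable:
  assumes y: "y = pre @ replicate (Suc v) True @ False # post"
    and v: "v < length x" and i: "i \<le> Suc (length x)"
  shows "bp_moves x y (Entry j, i, Suc (length pre))
           (Target j (x ! v) False 0, Suc v, Suc (Suc (length pre + Suc v)))"
proof -
  let ?h = "Suc (length pre)"
  have "bp_moves x y (Entry j, i, ?h) (Rewind j, i, ?h)"
    by (rule fa_moves_step[where dx = MoveS and dy = MoveS])
       (use y i in \<open>simp_all add: tape_read_def nth_append\<close>)
  also have "bp_moves x y (Rewind j, i, ?h) (Locate j, 0, ?h)"
    by (rule rewind_moves) (use i y in simp_all)
  also have "bp_moves x y (Locate j, 0, ?h) (Locate j, Suc v, Suc (length pre + Suc v))"
    using locate_moves[OF y, of 0] v by simp
  also have "bp_moves x y (Locate j, Suc v, Suc (length pre + Suc v))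
      (Target j (x ! v) False 0, Suc v, Suc (Suc (length pre + Suc v)))"
    by (rule fa_moves_step[where dx = MoveS and dy = MoveR])
       (use y v in \<open>simp_all add: tape_read_def nth_append\<close>)
  finally show ?thesis .
qed

lemma entry_reads_targets:
  assumes y: "y = pre @ replicate q True @ False # replicate r True @ False # post"
    and q: "q < 5" and r: "r < 5" and i: "i \<le> Suc (length x)"
  shows "bp_moves x y (Target j z False 0, i, Suc (length pre))
           (Skip (3 * (4 - j) + 3 * (if z then r else q)) (if z then r else q), i,
            Suc (length pre + q + r + 2))"
proof -
  define pre' where "pre' = pre @ replicate q True @ [False]"
  have y': "y = pre' @ replicate r True @ False # post"
    using y by (simp add: pre'_def)
  let ?tq = "if \<not> z then q else 0"
  have "bp_moves x y (Target j z False 0, i, Suc (length pre)) (Target j z False ?tq, i, Suc (length pre + q))"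
    using target_moves[of y pre q "False # replicate r True @ False # post" z False 0 i x j] y q i by (cases z) simp_all
  also have "bp_moves x y (Target j z False ?tq, i, Suc (length pre + q)) (Target j z True ?tq, i, Suc (length pre'))"
    by (rule fa_moves_step[where dx = MoveS and dy = MoveR])
       (use y i in \<open>simp_all add: pre'_def tape_read_def nth_append\<close>)
  also have "bp_moves x y (Target j z True ?tq, i, Suc (length pre'))
      (Target j z True (if z then r else q), i, Suc (length pre' + r))"
    using target_moves[OF y', of z True ?tq i x j] r i by (cases z) simp_all
  also have "bp_moves x y (Target j z True (if z then r else q), i, Suc (length pre' + r))
      (Skip (3 * (4 - j) + 3 * (if z then r else q)) (if z then r else q), i, Suc (Suc (length pre' + r)))"
    by (rule fa_moves_step[where dx = MoveS and dy = MoveR])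
       (use y' i in \<open>simp_all add: tape_read_def nth_append\<close>)
  finally show ?thesis
    by (simp add: pre'_def)
qed

lemma inner_entry_moves:
  assumes y: "y = pre @ entry (Suc v) q r @ post"
    and "v < length x" and "q < 5" and "r < 5" and "i \<le> Suc (length x)"
  shows "bp_moves x y (Entry j, i, Suc (length pre))
           (Skip (3 * (4 - j) + 3 * (if x ! v then r else q)) (if x ! v then r else q), Suc v,
            Suc (length pre + length (entry (Suc v) q r)))"
proof -
  define pre' where "pre' = pre @ replicate (Suc v) True @ [False]"
  have "bp_moves x y (Entry j, i, Suc (length pre)) (Target j (x ! v) False 0, Suc v, Suc (length pre'))"
    using entry_reads_variable[of y pre v _ x i j] assms by (simp add: entry_def pre'_def)
  also have "bp_moves x y (Target j (x ! v) False 0, Suc v, Suc (length pre'))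
      (Skip (3 * (4 - j) + 3 * (if x ! v then r else q)) (if x ! v then r else q), Suc v,
       Suc (length pre' + q + r + 2))"
    by (rule entry_reads_targets) (use assms in \<open>simp_all add: entry_def pre'_def\<close>)
  finally show ?thesis
    by (cases "x ! v") (simp_all add: entry_def pre'_def add_ac)
qed

lemma sink_entry_moves:
  assumes y: "y = pre @ entry 0 q r @ post" and i: "i \<le> Suc (length x)"
  shows "bp_moves x y (Entry j, i, Suc (length pre)) (if 0 < q then Accept else Reject, i, Suc (Suc (length pre)))"
proof -
  have "bp_moves x y (Entry j, i, Suc (length pre)) (Label, i, Suc (Suc (length pre)))"
    by (rule fa_moves_step[where dx = MoveS and dy = MoveR])
       (use y i in \<open>simp_all add: entry_def tape_read_def nth_append\<close>)
  also have "bp_moves x y (Label, i, Suc (Suc (length pre)))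
      (if 0 < q then Accept else Reject, i, Suc (Suc (length pre)))"
  proof (rule fa_moves_step[where dx = MoveS and dy = MoveS])
    show "bp_delta Label (tape_read x i) (tape_read y (Suc (Suc (length pre)))) =
        Some (if 0 < q then Accept else Reject, MoveS, MoveS)"
      using y by (cases q) (simp_all add: entry_def tape_read_def nth_append)
  qed (use y i in \<open>simp_all add: entry_def\<close>)
  finally show ?thesis .
qed

lemma start_moves_entry:
  assumes "2 \<le> length y"
  shows "bp_moves x y (Start, 0, 0) (Entry 0, 0, 1)"
proof -
  have "bp_moves x y (Start, 0, 0) (Probe, 0, 1)"
    by (rule fa_moves_step[where dx = MoveS and dy = MoveR]) (use assms in simp_all)
  also have "bp_moves x y (Probe, 0, 1) (Peek, 0, 2)"
    by (rule fa_moves_step[where dx = MoveS and dy = MoveR]) (use assms in simp_all)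
  also have "bp_moves x y (Peek, 0, 2) (Entry 0, 0, 1)"
    by (rule fa_moves_step[where dx = MoveS and dy = MoveL]) (use assms in \<open>simp_all add: tape_read_def\<close>)
  finally show ?thesis .
qed

lemma start_moves_bit: "bp_moves x [b] (Start, 0, 0) (if b then Accept else Reject, 0, 1)"
proof -
  have "bp_moves x [b] (Start, 0, 0) (Probe, 0, 1)"
    by (rule fa_moves_step[where dx = MoveS and dy = MoveR]) simp_all
  also have "bp_moves x [b] (Probe, 0, 1) (Peek, 0, 2)"
    by (rule fa_moves_step[where dx = MoveS and dy = MoveR]) simp_all
  also have "bp_moves x [b] (Peek, 0, 2) (Label, 0, 1)"
    by (rule fa_moves_step[where dx = MoveS and dy = MoveL]) (simp_all add: tape_read_def)
  also have "bp_moves x [b] (Label, 0, 1) (if b then Accept else Reject, 0, 1)"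
    by (rule fa_moves_step[where dx = MoveS and dy = MoveS]) (simp_all add: tape_read_def)
  finally show ?thesis .
qed

lemma bp_machine_accepts_iff:
  assumes "bp_moves x y (Start, 0, 0) (s, i, h)" and "s = Accept \<or> s = Reject"
  shows "tm_accepts bp_machine x y \<longleftrightarrow> s = Accept"
proof -
  have "tm_accepts (fa_tm bp_states Start {Accept} bp_delta) x y \<longleftrightarrow> s \<in> {Accept}"
    by (rule tm_accepts_fa_tm[OF bp_states_closed _ assms(1)])
       (use assms(2) in \<open>auto simp: set_bp_states fa_next_def\<close>)
  then show ?thesis
    by (simp add: bp_machine_def)
qed

section \<open>Layers of a width-5 branching program\<close>

fun is_sink :: "bpnode \<Rightarrow> bool" where
  "is_sink (Sink _) = True"
| "is_sink (Inner _ _ _) = False"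

definition leveling :: "bp \<Rightarrow> (nat \<Rightarrow> nat) \<Rightarrow> bool" where
  "leveling B lev \<longleftrightarrow>
     (\<forall>v < bp_size B. \<forall>i a b. bp_nodes B ! v = Inner i a b \<longrightarrow>
        lev a = Suc (lev v) \<and> lev b = Suc (lev v)) \<and>
     (\<forall>l. card {v. v < bp_size B \<and> lev v = l} \<le> 5)"

definition level :: "bp \<Rightarrow> nat \<Rightarrow> nat" where
  "level B = (SOME lev. leveling B lev)"

lemma leveling_level:
  assumes "width5_bp n B"
  shows "leveling B (level B)"
proof -
  have "\<exists>lev. leveling B lev"
    using assms unfolding width5_bp_def leveling_def by blast
  then show ?thesis
    unfolding level_def by (rule someI_ex)
qed

(* Layer 0 is just the start node, so that the simulation begins with the first advice entry. *)
definition layer :: "bp \<Rightarrow> nat \<Rightarrow> nat list" where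
  "layer B t = (if t = 0 then [bp_start B]
     else sorted_list_of_set {v. v < bp_size B \<and> level B v = level B (bp_start B) + t})"

lemma length_layer:
  assumes "width5_bp n B"
  shows "length (layer B t) \<le> 5"
  using leveling_level[OF assms] by (simp add: layer_def leveling_def)

lemma layer_level:
  assumes "width5_bp n B" and "v \<in> set (layer B t)"
  shows "v < bp_size B \<and> level B v = level B (bp_start B) + t"
proof (cases "t = 0")
  case True
  then show ?thesis
    using assms unfolding width5_bp_def bp_wf_def by (simp add: layer_def)
next
  case False
  then show ?thesis
    using assms(2) by (simp add: layer_def)
qed

lemma successors_in_layer:
  assumes w: "width5_bp n B" and v: "v \<in> set (layer B t)" and node: "bp_nodes B ! v = Inner i a b"
  shows "i < n \<and> a \<in> set (layer B (Suc t)) \<and> b \<in> set (layer B (Suc t))"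
proof -
  have lv: "v < bp_size B" "level B v = level B (bp_start B) + t"
    using layer_level[OF w v] by auto
  have "i < n \<and> a < bp_size B \<and> b < bp_size B"
    using w lv(1) node unfolding width5_bp_def bp_wf_def by blast
  moreover have "level B a = Suc (level B v) \<and> level B b = Suc (level B v)"
    using leveling_level[OF w] lv(1) node unfolding leveling_def by blast
  ultimately show ?thesis
    using lv(2) by (simp add: layer_def)
qed

definition bp_path :: "bp \<Rightarrow> bool list \<Rightarrow> nat \<Rightarrow> nat" where
  "bp_path B x t = (bp_step B x ^^ t) (bp_start B)"

lemma bp_path_in_layer:
  assumes w: "width5_bp n B" and inner: "\<forall>r < t. \<not> is_sink (bp_nodes B ! bp_path B x r)"
  shows "bp_path B x t \<in> set (layer B t)"
  using inner
proof (induction t)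
  case 0
  then show ?case by (simp add: bp_path_def layer_def)
next
  case (Suc t)
  then have v: "bp_path B x t \<in> set (layer B t)" by simp
  obtain i a b where node: "bp_nodes B ! bp_path B x t = Inner i a b"
    using Suc.prems by (cases "bp_nodes B ! bp_path B x t") auto
  have "bp_path B x (Suc t) = (if x ! i then b else a)"
    using node by (simp add: bp_path_def bp_step_def)
  then show ?case
    using successors_in_layer[OF w v node] by simp
qed

(* Along inner nodes the path descends one level per step, so its first bp_size B + 1 nodes
   would be distinct. *)
lemma bp_path_reaches_sink:
  assumes w: "width5_bp n B"
  shows "\<exists>s < bp_size B. is_sink (bp_nodes B ! bp_path B x s)"
proof (rule ccontr)
  assume "\<not> ?thesis"
  then have layer: "bp_path B x r \<in> set (layer B r)" if "r \<le> bp_size B" for r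
    using that by (intro bp_path_in_layer[OF w]) auto
  have "inj_on (bp_path B x) {..bp_size B}"
    using layer_level[OF w layer] by (intro inj_onI) (metis add_left_cancel atMost_iff)
  moreover have "bp_path B x ` {..bp_size B} \<subseteq> {..<bp_size B}"
    using layer_level[OF w layer] by auto
  ultimately have "card {..bp_size B} \<le> card {..<bp_size B}"
    by (intro card_inj_on_le) auto
  then show False
    by simp
qed

lemma bp_eval_path_sink:
  assumes "bp_nodes B ! bp_path B x s = Sink b" and "s \<le> bp_size B"
  shows "bp_eval B x = b"
proof -
  have "bp_path B x (s + k) = bp_path B x s" for k
    by (induction k) (use assms(1) in \<open>simp_all add: bp_path_def bp_step_def\<close>)
  from this[of "bp_size B - s"] show ?thesis
    using assms by (simp add: bp_eval_def bp_path_def)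
qed

lemma width5_bp_size_le_2_const:
  assumes w: "width5_bp n B" and size: "bp_size B \<le> 2"
  shows "bp_eval B x = bp_eval B x'"
proof (cases "bp_nodes B ! bp_start B")
  case (Sink b)
  then show ?thesis
    using bp_eval_path_sink[of B _ 0 b] by (simp add: bp_path_def)
next
  case (Inner i a b)
  have start: "bp_start B \<in> set (layer B 0)"
    by (simp add: layer_def)
  have ab: "a \<in> set (layer B 1)" "b \<in> set (layer B 1)"
    using successors_in_layer[OF w start Inner] by auto
  have "a \<noteq> bp_start B" "b \<noteq> bp_start B" "a < bp_size B" "b < bp_size B" "bp_start B < bp_size B"
    using layer_level[OF w ab(1)] layer_level[OF w ab(2)] layer_level[OF w start] by auto
  then have "a = b"
    using size by linarith
  then have path1: "bp_path B z 1 = a" for z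
    using Inner by (simp add: bp_path_def bp_step_def)
  have "is_sink (bp_nodes B ! a)"
  proof -
    obtain s where s: "s < bp_size B" and sink: "is_sink (bp_nodes B ! bp_path B x s)"
      using bp_path_reaches_sink[OF w] by blast
    have "s \<noteq> 0"
      using sink Inner by (cases s) (simp_all add: bp_path_def)
    then have "s = 1"
      using s size by linarith
    then show ?thesis
      using sink path1 by simp
  qed
  then obtain c where c: "bp_nodes B ! a = Sink c"
    by (cases "bp_nodes B ! a") auto
  have "bp_eval B z = c" for z
    using bp_eval_path_sink[of B z 1 c] path1 c \<open>a < bp_size B\<close> by simp
  then show ?thesis
    by simp
qed

section \<open>The advice string\<close>

definition node_entry :: "bp \<Rightarrow> nat \<Rightarrow> nat \<Rightarrow> bool list" where
  "node_entry B t v = (case bp_nodes B ! v of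
      Inner i a b \<Rightarrow> entry (Suc i) (index_of (layer B (Suc t)) a) (index_of (layer B (Suc t)) b)
    | Sink b \<Rightarrow> entry 0 (if b then 1 else 0) 0)"

definition advice_entry :: "bp \<Rightarrow> nat \<Rightarrow> bool list" where
  "advice_entry B k = (if k mod 5 < length (layer B (k div 5))
     then node_entry B (k div 5) (layer B (k div 5) ! (k mod 5)) else entry 0 0 0)"

definition bp_advice :: "bp \<Rightarrow> bool list" where
  "bp_advice B = concat (map (advice_entry B) [0..<5 * bp_size B])"

lemma advice_entry_is_entry: "\<exists>p q r. advice_entry B k = entry p q r"
  by (auto simp: advice_entry_def node_entry_def split: bpnode.splits)

lemma count_False_advice_entries:
  "count_list (concat (map (advice_entry B) ks)) False = 3 * length ks"
proof (induction ks)
  case (Cons k ks)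
  obtain p q r where "advice_entry B k = entry p q r"
    using advice_entry_is_entry by blast
  then show ?case
    using Cons by (simp add: entry_def)
qed simp

lemma last_advice_entries:
  "concat (map (advice_entry B) ks) = [] \<or> last (concat (map (advice_entry B) ks)) = False"
proof (induction ks)
  case (Cons k ks)
  obtain p q r where "advice_entry B k = entry p q r"
    using advice_entry_is_entry by blast
  then show ?case
    using Cons by (auto simp: entry_def last_append)
qed simp

lemma concat_map_upt_split:
  assumes "k < n"
  shows "concat (map f [0..<n]) = concat (map f [0..<k]) @ f k @ concat (map f [Suc k..<n])"
proof -
  have "[0..<n] = [0..<k] @ [k..<n]"
    using upt_add_eq_append[of 0 k "n - k"] assms by simp
  also have "[k..<n] = k # [Suc k..<n]"
    using assms by (simp add: upt_conv_Cons)
  finally show ?thesis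
    by simp
qed

definition advice_pos :: "bp \<Rightarrow> nat \<Rightarrow> nat" where
  "advice_pos B k = Suc (length (concat (map (advice_entry B) [0..<k])))"

definition reaches_layer :: "bp \<Rightarrow> bool list \<Rightarrow> nat \<Rightarrow> bool" where
  "reaches_layer B x t \<longleftrightarrow> (\<exists>i j. i \<le> Suc (length x) \<and> j < length (layer B t) \<and>
     layer B t ! j = bp_path B x t \<and>
     bp_moves x (bp_advice B) (Start, 0, 0) (Entry j, i, advice_pos B (5 * t + j)))"

lemma reaches_layer_0:
  assumes "0 < bp_size B"
  shows "reaches_layer B x 0"
proof -
  obtain p q r where e: "advice_entry B 0 = entry p q r"
    using advice_entry_is_entry by blast
  have "bp_advice B = entry p q r @ concat (map (advice_entry B) [1..<5 * bp_size B])"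
    using concat_map_upt_split[of 0 "5 * bp_size B" "advice_entry B"] assms e
    by (simp add: bp_advice_def)
  then have "2 \<le> length (bp_advice B)"
    by (simp add: entry_def)
  moreover have "advice_pos B 0 = 1"
    by (simp add: advice_pos_def)
  ultimately have "bp_moves x (bp_advice B) (Start, 0, 0) (Entry 0, 0, advice_pos B 0)"
    using start_moves_entry by simp
  moreover have "layer B 0 ! 0 = bp_path B x 0"
    by (simp add: layer_def bp_path_def)
  ultimately show ?thesis
    unfolding reaches_layer_def by (intro exI[of _ 0]) (simp add: layer_def)
qed

lemma reaches_layer_Suc:
  assumes w: "width5_bp (length x) B" and reach: "reaches_layer B x t"
    and t: "Suc t < bp_size B" and inner: "\<not> is_sink (bp_nodes B ! bp_path B x t)"
  shows "reaches_layer B x (Suc t)"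
proof -
  obtain i j where i: "i \<le> Suc (length x)" and j: "j < length (layer B t)"
    and v: "layer B t ! j = bp_path B x t"
    and moves: "bp_moves x (bp_advice B) (Start, 0, 0) (Entry j, i, advice_pos B (5 * t + j))"
    using reach unfolding reaches_layer_def by blast
  obtain var a b where node: "bp_nodes B ! bp_path B x t = Inner var a b"
    using inner by (cases "bp_nodes B ! bp_path B x t") auto
  let ?L = "layer B (Suc t)"
  let ?E = "advice_entry B"
  have "bp_path B x t \<in> set (layer B t)"
    using j v nth_mem by metis
  then have succ: "var < length x" "a \<in> set ?L" "b \<in> set ?L"
    using successors_in_layer[OF w _ node] by auto
  have j5: "j < 5" and L5: "length ?L \<le> 5"
    using j length_layer[OF w] by (auto intro: order_less_le_trans)
  have qr: "index_of ?L a < 5" "index_of ?L b < 5"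
    using index_of(1)[OF succ(2)] index_of(1)[OF succ(3)] L5 by auto
  define tt where "tt = (if x ! var then index_of ?L b else index_of ?L a)"
  have tt: "tt < length ?L" "?L ! tt = bp_path B x (Suc t)"
    using index_of[OF succ(2)] index_of[OF succ(3)] node by (auto simp: tt_def bp_path_def bp_step_def)
  define k where "k = 5 * t + j"
  define k' where "k' = 5 * Suc t + tt"
  have kk: "k < k'" "k' \<le> 5 * bp_size B"
    using j5 tt(1) L5 t by (auto simp: k_def k'_def)
  have entry_k: "?E k = entry (Suc var) (index_of ?L a) (index_of ?L b)"
    using j v node j5 by (simp add: advice_entry_def node_entry_def k_def)
  define u where "u = concat (map ?E [Suc k..<k'])"
  define P where "P = concat (map ?E [0..<k])"
  have "[Suc k..<5 * bp_size B] = [Suc k..<k'] @ [k'..<5 * bp_size B]"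
    using kk upt_add_eq_append[of "Suc k" k' "5 * bp_size B - k'"] by simp
  then have adv: "bp_advice B = P @ ?E k @ u @ concat (map ?E [k'..<5 * bp_size B])"
    using concat_map_upt_split[of k "5 * bp_size B" ?E] kk by (simp add: bp_advice_def P_def u_def)
  have pos: "advice_pos B k' = Suc (length P + length (?E k) + length u)"
    using concat_map_upt_split[of k k' ?E] kk by (simp add: advice_pos_def P_def u_def)
  have "bp_moves x (bp_advice B) (Entry j, i, advice_pos B k)
      (Skip (3 * (4 - j) + 3 * tt) tt, Suc var, Suc (length P + length (?E k)))"
    using inner_entry_moves[OF adv[unfolded entry_k] succ(1) qr i, of j] entry_k
    by (simp add: tt_def advice_pos_def P_def)
  also have "bp_moves x (bp_advice B) (Skip (3 * (4 - j) + 3 * tt) tt, Suc var, Suc (length P + length (?E k)))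
      (Skip 0 tt, Suc var, advice_pos B k')"
  proof -
    have "u = [] \<or> last u = False"
      unfolding u_def by (rule last_advice_entries)
    moreover have "count_list u False = 3 * (4 - j) + 3 * tt"
      using j5 by (simp add: u_def count_False_advice_entries k_def k'_def)
    ultimately show ?thesis
      using skip_moves[where y = "bp_advice B" and pre = "P @ ?E k" and u = u and t = tt
          and m = "3 * (4 - j) + 3 * tt" and i = "Suc var" and x = x] adv pos succ(1)
      by simp
  qed
  also have "bp_moves x (bp_advice B) (Skip 0 tt, Suc var, advice_pos B k') (Entry tt, Suc var, advice_pos B k')"
    by (rule fa_moves_step[where dx = MoveS and dy = MoveS])
       (use succ(1) kk adv pos in \<open>simp_all add: advice_pos_def\<close>)
  finally show ?thesis
    unfolding reaches_layer_def using moves tt succ(1) by (intro exI[of _ "Suc var"] exI[of _ tt]) (auto simp: k_def k'_def)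
qed

lemma reaches_layer_sink:
  assumes w: "width5_bp (length x) B" and reach: "reaches_layer B x t"
    and t: "t < bp_size B" and sink: "bp_nodes B ! bp_path B x t = Sink b"
  shows "\<exists>i h. bp_moves x (bp_advice B) (Start, 0, 0) (if b then Accept else Reject, i, h)"
proof -
  obtain i j where i: "i \<le> Suc (length x)" and j: "j < length (layer B t)"
    and v: "layer B t ! j = bp_path B x t"
    and moves: "bp_moves x (bp_advice B) (Start, 0, 0) (Entry j, i, advice_pos B (5 * t + j))"
    using reach unfolding reaches_layer_def by blast
  let ?E = "advice_entry B"
  define k where "k = 5 * t + j"
  have j5: "j < 5"
    using j length_layer[OF w] by (auto intro: order_less_le_trans)
  then have "k < 5 * bp_size B"
    using t by (simp add: k_def)
  then have adv: "bp_advice B = concat (map ?E [0..<k]) @ entry 0 (if b then 1 else 0) 0 @ concat (map ?E [Suc k..<5 * bp_size B])"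
    using concat_map_upt_split[of k "5 * bp_size B" ?E] j v sink j5
    by (simp add: bp_advice_def advice_entry_def node_entry_def k_def)
  note moves
  also have "bp_moves x (bp_advice B) (Entry j, i, advice_pos B (5 * t + j))
      (if b then Accept else Reject, i, Suc (advice_pos B k))"
    using sink_entry_moves[OF adv i, of j] by (cases b) (simp_all add: advice_pos_def k_def)
  finally show ?thesis
    by blast
qed

theorem bp_machine_accepts_bp_advice:
  assumes w: "width5_bp (length x) B"
  shows "tm_accepts bp_machine x (bp_advice B) \<longleftrightarrow> bp_eval B x"
proof -
  let ?sink = "\<lambda>s. is_sink (bp_nodes B ! bp_path B x s)"
  define s where "s = (LEAST s. ?sink s)"
  obtain s0 where s0: "s0 < bp_size B" "?sink s0"
    using bp_path_reaches_sink[OF w] by blast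
  have sink: "?sink s"
    unfolding s_def using s0(2) by (rule LeastI)
  have "s \<le> s0"
    unfolding s_def using s0(2) by (rule Least_le)
  with s0(1) have s: "s < bp_size B"
    by simp
  have reach: "reaches_layer B x r" if "r \<le> s" for r
    using that
  proof (induction r)
    case 0
    show ?case
      using s by (intro reaches_layer_0) simp
  next
    case (Suc r)
    show ?case
      by (rule reaches_layer_Suc[OF w])
         (use Suc s not_less_Least[of r ?sink] in \<open>simp_all add: s_def\<close>)
  qed
  obtain b where b: "bp_nodes B ! bp_path B x s = Sink b"
    using sink by (cases "bp_nodes B ! bp_path B x s") auto
  obtain i h where "bp_moves x (bp_advice B) (Start, 0, 0) (if b then Accept else Reject, i, h)"
    using reaches_layer_sink[OF w reach[OF order.refl] s b] by blast
  from bp_machine_accepts_iff[OF this] have "tm_accepts bp_machine x (bp_advice B) \<longleftrightarrow> b"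
    by auto
  moreover have "bp_eval B x = b"
    using bp_eval_path_sink[OF b] s by simp
  ultimately show ?thesis
    by simp
qed

lemma bp_machine_accepts_bit: "tm_accepts bp_machine x [b] \<longleftrightarrow> b"
  using bp_machine_accepts_iff[OF start_moves_bit] by auto

lemma length_advice_entry:
  assumes w: "width5_bp n B"
  shows "length (advice_entry B k) \<le> n + 11"
proof -
  let ?t = "k div 5" and ?j = "k mod 5"
  have "length (node_entry B ?t v) \<le> n + 11" if v: "v \<in> set (layer B ?t)" for v
  proof (cases "bp_nodes B ! v")
    case (Inner i a b)
    let ?L = "layer B (Suc ?t)"
    have succ: "i < n" "a \<in> set ?L" "b \<in> set ?L"
      using successors_in_layer[OF w v Inner] by auto
    have "index_of ?L a < length ?L" "index_of ?L b < length ?L" "length ?L \<le> 5"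
      using index_of(1)[OF succ(2)] index_of(1)[OF succ(3)] length_layer[OF w] by auto
    then show ?thesis
      using succ(1) Inner by (simp add: node_entry_def entry_def)
  qed (simp add: node_entry_def entry_def)
  then show ?thesis
    by (auto simp: advice_entry_def entry_def)
qed

lemma length_bp_advice:
  assumes "width5_bp n B"
  shows "length (bp_advice B) \<le> 5 * bp_size B * (n + 11)"
proof -
  have "length (bp_advice B) = (\<Sum>k\<leftarrow>[0..<5 * bp_size B]. length (advice_entry B k))"
    by (simp add: bp_advice_def length_concat comp_def)
  also have "\<dots> \<le> (\<Sum>k\<leftarrow>[0..<5 * bp_size B]. n + 11)"
    using length_advice_entry[OF assms] by (intro sum_list_mono)
  also have "\<dots> = 5 * bp_size B * (n + 11)"
    by (simp add: sum_list_triv)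
  finally show ?thesis .
qed

section \<open>Size bounds and the main theorem\<close>

lemma log2_3_ge: "3 / 2 \<le> log 2 (3::real)"
proof -
  have "(2::real) powr (3 / 2) = 2 powr (1 + 1 / 2)"
    by simp
  also have "\<dots> = 2 powr 1 * 2 powr (1 / 2)"
    by (rule powr_add)
  also have "\<dots> = 2 * sqrt 2"
    by (simp add: powr_half_sqrt)
  also have "\<dots> \<le> 3"
  proof -
    have "sqrt 2 \<le> sqrt ((3 / 2)\<^sup>2)"
      by (subst real_sqrt_le_iff) (simp add: power2_eq_square)
    then show ?thesis
      by simp
  qed
  finally have "log 2 (2 powr (3 / 2)) \<le> log 2 (3::real)"
    by (subst log_le_cancel_iff) auto
  then show ?thesis
    by simp
qed

lemma quasipolynomial_times_linear:
  fixes S n :: nat and c :: real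
  assumes n: "3 \<le> n" and S: "real S \<le> 2 powr (log 2 n powr c)"
  shows "real (5 * S * (n + 11)) \<le> 2 powr (log 2 n powr (max c 1 + 6))"
proof -
  define L where "L = log 2 (real n)"
  define X where "X = L powr max c 1"
  have "log 2 3 \<le> L"
    using n unfolding L_def by (subst log_le_cancel_iff) auto
  then have L: "3 / 2 \<le> L"
    using log2_3_ge by linarith
  have XL: "L \<le> X"
    using powr_mono[of 1 "max c 1" L] L unfolding X_def by simp
  have "L powr c \<le> X"
    unfolding X_def using L by (intro powr_mono) auto
  then have "real S \<le> 2 powr X"
    by (rule order_trans[OF S[folded L_def] powr_mono]) simp
  moreover have "real n + 11 \<le> 2 powr (L + 4)"
    using n by (simp add: L_def powr_add)
  ultimately have "real (5 * S * (n + 11)) \<le> 2 powr 3 * 2 powr X * 2 powr (L + 4)"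
    by (simp add: mult_mono)
  also have "\<dots> = 2 powr (X + L + 7)"
    by (simp only: powr_add[symmetric]) (rule arg_cong[of _ _ "(powr) 2"], linarith)
  also have "\<dots> \<le> 2 powr (L powr (max c 1 + 6))"
  proof (intro powr_mono)
    have "(3 / 2) ^ 6 \<le> L ^ 6"
      using L by (intro power_mono) auto
    then have "11 \<le> L powr 6"
      using L by (simp add: powr_realpow power_divide)
    then have "11 * X \<le> X * L powr 6"
      using XL L by (simp add: mult_left_mono mult.commute)
    moreover have "L powr (max c 1 + 6) = X * L powr 6"
      using L unfolding X_def by (simp add: powr_add)
    ultimately show "X + L + 7 \<le> L powr (max c 1 + 6)"
      using XL L by linarith
  qed simp
  finally show ?thesis
    unfolding L_def .
qed

lemma size_bound_le_2:
  fixes S n :: nat and c :: real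
  assumes "1 \<le> n" and "n \<le> 2" and "real S \<le> 2 powr (log 2 n powr c)"
  shows "S \<le> 2"
proof -
  have "n = 1 \<or> n = 2"
    using assms(1,2) by linarith
  then have "real S \<le> 2"
    using assms(3) by auto
  then show ?thesis
    by linarith
qed

lemma wf_bp_machine: "wf_tm bp_machine"
  unfolding bp_machine_def by (rule wf_fa_tm[OF bp_states_closed]) (simp add: set_bp_states)

lemma bp_machine_const_space: "tm_const_space bp_machine 1"
  unfolding bp_machine_def by (rule fa_tm_const_space)

(* For n \<le> 2 the bound 2 powr (log 2 n powr c') equals 1 or 2 (note 0 powr c' = 0),
   too small for bp_advice. *)
definition advice_for :: "bp \<Rightarrow> nat \<Rightarrow> bool list" where
  "advice_for B n = (if n \<le> 2 then [bp_eval B (replicate n False)] else bp_advice B)"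

lemma length_advice_for:
  assumes "width5_bp n B" and "1 \<le> n" and "real (bp_size B) \<le> 2 powr (log 2 n powr c)"
  shows "real (length (advice_for B n)) \<le> 2 powr (log 2 n powr (max c 1 + 6))"
proof (cases "n \<le> 2")
  case True
  then show ?thesis
    by (simp add: advice_for_def ge_one_powr_ge_zero)
next
  case False
  then have "length (advice_for B n) \<le> 5 * bp_size B * (n + 11)"
    using length_bp_advice[OF assms(1)] by (simp add: advice_for_def)
  then have "real (length (advice_for B n)) \<le> real (5 * bp_size B * (n + 11))"
    by (rule of_nat_mono)
  also have "\<dots> \<le> 2 powr (log 2 n powr (max c 1 + 6))"
    by (rule quasipolynomial_times_linear[OF _ assms(3)]) (use False in simp)
  finally show ?thesis .
qed

lemma bp_machine_accepts_advice_for: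
  assumes "width5_bp (length x) B" and "1 \<le> length x"
    and "real (bp_size B) \<le> 2 powr (log 2 (length x) powr c)"
  shows "tm_accepts bp_machine x (advice_for B (length x)) \<longleftrightarrow> bp_eval B x"
proof (cases "length x \<le> 2")
  case True
  then have "bp_size B \<le> 2"
    using size_bound_le_2 assms(2,3) by blast
  then show ?thesis
    using True width5_bp_size_le_2_const[OF assms(1)]
    by (simp add: advice_for_def bp_machine_accepts_bit)
next
  case False
  then show ?thesis
    using bp_machine_accepts_bp_advice[OF assms(1)] by (simp add: advice_for_def)
qed

theorem lemma4:
  fixes B :: "nat \<Rightarrow> bp" and c :: real
  assumes "\<And>n. n \<ge> 1 \<Longrightarrow> width5_bp n (B n)"
      and "\<And>n. n \<ge> 1 \<Longrightarrow> real (bp_size (B n)) \<le> 2 powr ((log 2 (real n)) powr c)"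
  shows "\<exists>(M :: tm) (k :: nat) (c' :: real) (a :: nat \<Rightarrow> bool list).
           wf_tm M \<and> tm_const_space M k \<and>
           (\<forall>n \<ge> 1. real (length (a n)) \<le> 2 powr ((log 2 (real n)) powr c')) \<and>
           (\<forall>x :: bool list. length x \<ge> 1 \<longrightarrow>
              (tm_accepts M x (a (length x)) \<longleftrightarrow> bp_eval (B (length x)) x))"
proof (intro exI conjI allI impI)
  show "wf_tm bp_machine"
    by (rule wf_bp_machine)
  show "tm_const_space bp_machine 1"
    by (rule bp_machine_const_space)
  show "real (length (advice_for (B n) n)) \<le> 2 powr (log 2 n powr (max c 1 + 6))" if "1 \<le> n" for n
    using length_advice_for[OF assms(1)[OF that] that assms(2)[OF that]] .
  show "tm_accepts bp_machine x (advice_for (B (length x)) (length x)) \<longleftrightarrow> bp_eval (B (length x)) x"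
    if "1 \<le> length x" for x
    using bp_machine_accepts_advice_for[OF assms(1)[OF that] that assms(2)[OF that]] .
qed

end
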